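(* Let $f$, $c_f$ be as in the context and let $(\bar u_k)$ be generated by $\bar u_{k+1}=\bar u_k+\operatorname{argmin}_{\bar v}\{c_f(\bar u_k+\bar v;\bar u_k)+\frac{1}{2\gamma_k}\|\bar v\|_2^2\}$ from $\bar u_0$. Let $S=\{\bar u:f(\bar u)\le f(\bar u_0)\}$, let $\ell_{f,S}$ be the Lipschitz constant of $f$ on $S$, let $C=S+B_1$ where $B_1$ is the closed unit Euclidean ball centered at $0$, and let $M_C>0$ be such that $|f(\bar v)-c_f(\bar v;\bar u)|\le\frac{M_C}{2}\|\bar v-\bar u\|_2^2$ for all $\bar u,\bar v\in C$. Then for any $k$ with $\bar u_k\in S$, any step size $$\gamma_k\le\hat\gamma=\min\{\ell_{f,S}^{-1},M_C^{-1}\}$$ ensures the sufficient decrease condition $f(\bar u_{k+1})\le c_f(\bar u_{k+1};\bar u_k)+\frac{1}{2\gamma_k}\|\bar u_{k+1}-\bar u_k\|_2^2$.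
   Context: Let $h:\mathbb{R}^{\tau d}\to\mathbb{R}$ and $g:\mathbb{R}^{\tau p}\to\mathbb{R}$ be convex quadratic functions, $\tilde x:\mathbb{R}^{\tau p}\to\mathbb{R}^{\tau d}$ differentiable with continuous gradients, and $f(\bar u)=h(\tilde x(\bar u))+g(\bar u)$. For differentiable $F:\mathbb{R}^n\to\mathbb{R}^m$, $\nabla F(z)\in\mathbb{R}^{n\times m}$ is the transposed Jacobian. The convex model is $c_f(\bar u+\bar v;\bar u)=h(\tilde x(\bar u)+\nabla\tilde x(\bar u)^\top\bar v)+g(\bar u+\bar v)$. *)

theory Defs
  imports "HOL-Analysis.Analysis"
begin

definition convex_quadratic :: "(real^'n \<Rightarrow> real) \<Rightarrow> bool" where
  "convex_quadratic q \<longleftrightarrow>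
     (\<exists>(Q::real^'n^'n) (b::real^'n) (c::real).
        transpose Q = Q \<and> (\<forall>x. 0 \<le> x \<bullet> (Q *v x)) \<and>
        (\<forall>x. q x = (1/2) * (x \<bullet> (Q *v x)) + b \<bullet> x + c))"

definition comp_obj ::
  "(real^'d \<Rightarrow> real) \<Rightarrow> (real^'p \<Rightarrow> real) \<Rightarrow> (real^'p \<Rightarrow> real^'d) \<Rightarrow> real^'p \<Rightarrow> real" where
  "comp_obj h g xt u = h (xt u) + g u"

text \<open>The convex model c_f(w; u) = h(xt(u) + J(u)(w - u)) + g(w), where J(u) is the Jacobian
  of xt at u, i.e. J(u) v = (nabla xt(u))^T v.\<close>
definition conv_model ::
  "(real^'d \<Rightarrow> real) \<Rightarrow> (real^'p \<Rightarrow> real) \<Rightarrow> (real^'p \<Rightarrow> real^'d) \<Rightarrow> (real^'p \<Rightarrow> real^'p^'d)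
    \<Rightarrow> real^'p \<Rightarrow> real^'p \<Rightarrow> real" where
  "conv_model h g xt J w u = h (xt u + J u *v (w - u)) + g w"

end

theory Submission
  imports Defs
begin

text \<open>Since the model is convex, the proximal objective
  \<open>v \<mapsto> c\<^sub>f(u\<^sub>k + v; u\<^sub>k) + \<parallel>v\<parallel>\<^sup>2/(2\<gamma>\<^sub>k)\<close> is \<open>1/\<gamma>\<^sub>k\<close>-strongly convex,
  so its minimiser \<open>d = u\<^sub>k\<^sub>+\<^sub>1 - u\<^sub>k\<close> satisfies
  \<open>c\<^sub>f(u\<^sub>k\<^sub>+\<^sub>1; u\<^sub>k) + \<parallel>d\<parallel>\<^sup>2/\<gamma>\<^sub>k \<le> f(u\<^sub>k)\<close>.
  Near \<open>u\<^sub>k\<close> the model agrees with \<open>f\<close> to second order, and \<open>f\<close> decreases at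
  most with slope \<open>\<ell>\<close>; by convexity the model then decreases at most with slope \<open>\<ell>\<close>
  along the whole ray through \<open>d\<close>, i.e. \<open>c\<^sub>f(u\<^sub>k\<^sub>+\<^sub>1; u\<^sub>k) \<ge> f(u\<^sub>k) - \<ell> \<parallel>d\<parallel>\<close>.
  Together \<open>\<parallel>d\<parallel> \<le> \<gamma>\<^sub>k \<ell> \<le> 1\<close>, so \<open>u\<^sub>k\<^sub>+\<^sub>1\<close> lies in \<open>C\<close>, where the
  model error is at most \<open>M\<^sub>C \<parallel>d\<parallel>\<^sup>2/2 \<le> \<parallel>d\<parallel>\<^sup>2/(2\<gamma>\<^sub>k)\<close>.
  The smoothness of \<open>xt\<close> enters only through \<open>M\<^sub>C\<close>.\<close>

lemma convex_quadratic_imp_convex_on: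
  assumes "convex_quadratic q"
  shows "convex_on UNIV q"
proof
  fix t :: real and x y
  assume t: "0 < t" "t < 1"
  obtain Q b c where Q_psd: "\<forall>x. 0 \<le> x \<bullet> (Q *v x)"
    and q: "\<forall>x. q x = (1/2) * (x \<bullet> (Q *v x)) + b \<bullet> x + c"
    using assms unfolding convex_quadratic_def by blast
  have "(1 - t) * q x + t * q y - q ((1 - t) *\<^sub>R x + t *\<^sub>R y)
          = (1/2) * (t * (1 - t)) * ((y - x) \<bullet> (Q *v (y - x)))"
    unfolding q[rule_format]
    by (simp add: inner_add_left inner_add_right inner_diff_left inner_diff_right algebra_simps)
      (simp add: field_simps)
  moreover have "0 \<le> (1/2) * (t * (1 - t)) * ((y - x) \<bullet> (Q *v (y - x)))"
    using Q_psd t by simp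
  ultimately show "q ((1 - t) *\<^sub>R x + t *\<^sub>R y) \<le> (1 - t) * q x + t * q y"
    by linarith
qed simp

lemma convex_on_compose_affine:
  assumes "convex_on UNIV f" "linear l"
  shows "convex_on UNIV (\<lambda>x. f (l x + c))"
proof
  fix t :: real and x y
  assume "0 < t" "t < 1"
  have "l ((1 - t) *\<^sub>R x + t *\<^sub>R y) + c = (1 - t) *\<^sub>R (l x + c) + t *\<^sub>R (l y + c)"
    by (simp add: linear_add[OF assms(2)] linear_scale[OF assms(2)]) (simp add: algebra_simps)
  then show "f (l ((1 - t) *\<^sub>R x + t *\<^sub>R y) + c) \<le> (1 - t) * f (l x + c) + t * f (l y + c)"
    using convex_onD[OF assms(1), of t "l x + c" "l y + c"] \<open>0 < t\<close> \<open>t < 1\<close> by simp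
qed simp

lemma convex_on_conv_model:
  assumes "convex_quadratic h" "convex_quadratic g"
  shows "convex_on UNIV (\<lambda>w. conv_model h g xt J w u)"
proof -
  have "convex_on UNIV (\<lambda>w. h (J u *v w + (xt u - J u *v u)))"
    using assms(1) by (intro convex_on_compose_affine convex_quadratic_imp_convex_on matrix_vector_mul_linear)
  then have "convex_on UNIV (\<lambda>w. h (J u *v w + (xt u - J u *v u)) + g w)"
    using convex_quadratic_imp_convex_on[OF assms(2)] by (rule convex_on_add)
  then show ?thesis
    by (simp add: conv_model_def matrix_vector_mult_diff_distrib algebra_simps)
qed

lemma convex_prox_step_decrease:
  fixes \<phi> :: "'a::real_normed_vector \<Rightarrow> real"
  assumes "convex_on UNIV \<phi>" "\<gamma> > 0"
    and opt: "\<And>w. \<phi> (x + d) + 1 / (2 * \<gamma>) * (norm d)\<^sup>2 \<le> \<phi> (x + w) + 1 / (2 * \<gamma>) * (norm w)\<^sup>2"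
  shows "\<phi> (x + d) + (norm d)\<^sup>2 / \<gamma> \<le> \<phi> x"
proof -
  define X where "X = 1 / (2 * \<gamma>) * (norm d)\<^sup>2"
  have "t * X \<le> \<phi> x - \<phi> (x + d) - X" if t: "0 < t" "t < 1" for t
  proof -
    have "\<phi> (x + d) + X \<le> \<phi> (x + t *\<^sub>R d) + t\<^sup>2 * X"
      using opt[of "t *\<^sub>R d"] t by (simp add: X_def power_mult_distrib)
    also have "\<phi> (x + t *\<^sub>R d) \<le> (1 - t) * \<phi> x + t * \<phi> (x + d)"
      using convex_onD[OF assms(1), of t x "x + d"] t by (simp add: algebra_simps)
    finally have "(1 - t) * (\<phi> (x + d) + X + t * X) \<le> (1 - t) * \<phi> x"
      by (simp add: algebra_simps power2_eq_square)
    then show ?thesis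
      using t by simp
  qed
  then have "X \<le> \<phi> x - \<phi> (x + d) - X"
    by (rule field_le_mult_one_interval)
  then show ?thesis
    using \<open>\<gamma> > 0\<close> by (simp add: X_def)
qed

lemma convex_prox_step_norm_le:
  fixes \<phi> :: "'a::real_normed_vector \<Rightarrow> real"
  assumes "convex_on UNIV \<phi>" "\<gamma> > 0" "L \<ge> 0"
    and opt: "\<And>w. \<phi> (x + d) + 1 / (2 * \<gamma>) * (norm d)\<^sup>2 \<le> \<phi> (x + w) + 1 / (2 * \<gamma>) * (norm w)\<^sup>2"
    and slope: "\<phi> x - L * norm d \<le> \<phi> (x + d)"
  shows "norm d \<le> \<gamma> * L"
proof -
  have "(norm d)\<^sup>2 / \<gamma> \<le> L * norm d"
    using convex_prox_step_decrease[OF assms(1,2) opt] slope by linarith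
  then have "norm d * norm d \<le> (\<gamma> * L) * norm d"
    using \<open>\<gamma> > 0\<close> by (simp add: divide_le_eq power2_eq_square algebra_simps)
  then show ?thesis
    using \<open>\<gamma> > 0\<close> \<open>L \<ge> 0\<close> by (cases "d = 0") simp_all
qed

lemma convex_on_lower_bound_along_ray:
  fixes \<phi> :: "'a::real_vector \<Rightarrow> real"
  assumes "convex_on UNIV \<phi>"
    and near: "\<forall>\<^sub>F s in at_right 0. \<phi> x - s * A - s\<^sup>2 * B \<le> \<phi> (x + s *\<^sub>R d)"
  shows "\<phi> x - A \<le> \<phi> (x + d)"
proof (rule tendsto_upperbound)
  show "((\<lambda>s. \<phi> x - A - s * B) \<longlongrightarrow> \<phi> x - A) (at_right 0)"
    by (auto intro!: tendsto_eq_intros)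
  show "\<forall>\<^sub>F s in at_right 0. \<phi> x - A - s * B \<le> \<phi> (x + d)"
    using near eventually_at_right_real[OF zero_less_one]
  proof eventually_elim
    case (elim s)
    have "\<phi> (x + s *\<^sub>R d) \<le> (1 - s) * \<phi> x + s * \<phi> (x + d)"
      using convex_onD[OF assms(1), of s x "x + d"] elim by (simp add: algebra_simps)
    with elim have "s * (\<phi> x - A - s * B) \<le> s * \<phi> (x + d)"
      by (simp add: algebra_simps power2_eq_square)
    then show ?case
      using elim by simp
  qed
qed simp

lemma lipschitz_on_sublevel_lower_bound:
  fixes f :: "'a::metric_space \<Rightarrow> real"
  assumes lip: "L-lipschitz_on {v. f v \<le> a} f" and "f x \<le> a"
  shows "f x - L * dist y x \<le> f y"
proof (cases "f y \<le> a")
  case True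
  then have "dist (f y) (f x) \<le> L * dist y x"
    using lipschitz_onD[OF lip] \<open>f x \<le> a\<close> by simp
  then show ?thesis
    by (simp add: dist_real_def)
next
  case False
  have "0 \<le> L * dist y x"
    using lipschitz_on_nonneg[OF lip] by simp
  with False \<open>f x \<le> a\<close> show ?thesis
    by linarith
qed

lemma convex_model_lower_bound:
  fixes f c :: "'a::real_normed_vector \<Rightarrow> real"
  assumes "convex_on UNIV c" and "c x = f x"
    and lip: "L-lipschitz_on {v. f v \<le> a} f" and "f x \<le> a"
    and error: "\<And>e. norm e \<le> 1 \<Longrightarrow> \<bar>f (x + e) - c (x + e)\<bar> \<le> B * (norm e)\<^sup>2"
  shows "f x - L * norm d \<le> c (x + d)"
proof (rule convex_on_lower_bound_along_ray[OF assms(1), of x _ "B * (norm d)\<^sup>2", unfolded \<open>c x = f x\<close>])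
  have "((\<lambda>s. norm (s *\<^sub>R d)) \<longlongrightarrow> 0) (at_right 0)"
    by (auto intro!: tendsto_eq_intros)
  then have "\<forall>\<^sub>F s in at_right 0. norm (s *\<^sub>R d) < 1"
    by (rule order_tendstoD(2)) simp
  with eventually_at_right_less
  show "\<forall>\<^sub>F s in at_right 0. f x - s * (L * norm d) - s\<^sup>2 * (B * (norm d)\<^sup>2) \<le> c (x + s *\<^sub>R d)"
  proof eventually_elim
    case (elim s)
    have "f (x + s *\<^sub>R d) - c (x + s *\<^sub>R d) \<le> B * (s\<^sup>2 * (norm d)\<^sup>2)"
      using abs_le_D1[OF error[OF less_imp_le[OF elim(2)]]] elim(1) by (simp add: power_mult_distrib)
    moreover have "f x - L * (s * norm d) \<le> f (x + s *\<^sub>R d)"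
      using lipschitz_on_sublevel_lower_bound[OF lip \<open>f x \<le> a\<close>, of "x + s *\<^sub>R d"] elim(1)
      by (simp add: dist_norm)
    ultimately show ?case
      by (simp add: algebra_simps)
  qed
qed

theorem lemma3:
  fixes h :: "real^'d \<Rightarrow> real" and g :: "real^'p \<Rightarrow> real"
    and xt :: "real^'p \<Rightarrow> real^'d" and J :: "real^'p \<Rightarrow> real^'p^'d"
    and u :: "nat \<Rightarrow> real^'p" and \<gamma> :: "nat \<Rightarrow> real"
    and L M :: real and k :: nat
  assumes h_quad: "convex_quadratic h"
    and g_quad: "convex_quadratic g"
    and xt_deriv: "\<And>v. (xt has_derivative (\<lambda>w. J v *v w)) (at v)"
    and J_cont: "continuous_on UNIV J"
    and \<gamma>_pos: "\<And>j. \<gamma> j > 0"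
    and iter: "\<And>j w. conv_model h g xt J (u (Suc j)) (u j)
                        + 1 / (2 * \<gamma> j) * (norm (u (Suc j) - u j))\<^sup>2
                      \<le> conv_model h g xt J (u j + w) (u j) + 1 / (2 * \<gamma> j) * (norm w)\<^sup>2"
    and L_pos: "L > 0"
    and L_lip: "L-lipschitz_on {v. comp_obj h g xt v \<le> comp_obj h g xt (u 0)} (comp_obj h g xt)"
    and M_pos: "M > 0"
    and M_bound: "\<And>v w. v \<in> {s + b | s b. comp_obj h g xt s \<le> comp_obj h g xt (u 0) \<and> b \<in> cball 0 1}
                   \<Longrightarrow> w \<in> {s + b | s b. comp_obj h g xt s \<le> comp_obj h g xt (u 0) \<and> b \<in> cball 0 1}
                   \<Longrightarrow> \<bar>comp_obj h g xt w - conv_model h g xt J w v\<bar> \<le> M / 2 * (norm (w - v))\<^sup>2"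
    and uk_S: "comp_obj h g xt (u k) \<le> comp_obj h g xt (u 0)"
    and step: "\<gamma> k \<le> min (1 / L) (1 / M)"
  shows "comp_obj h g xt (u (Suc k))
           \<le> conv_model h g xt J (u (Suc k)) (u k) + 1 / (2 * \<gamma> k) * (norm (u (Suc k) - u k))\<^sup>2"
proof -
  define f where "f = comp_obj h g xt"
  define c where "c w = conv_model h g xt J w (u k)" for w
  define d where "d = u (Suc k) - u k"
  have model_error: "\<bar>f (u k + e) - c (u k + e)\<bar> \<le> M / 2 * (norm e)\<^sup>2" if "norm e \<le> 1" for e
  proof -
    have "u k + 0 \<in> {s + b | s b. f s \<le> f (u 0) \<and> b \<in> cball 0 1}"
      and "u k + e \<in> {s + b | s b. f s \<le> f (u 0) \<and> b \<in> cball 0 1}"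
      using uk_S that unfolding f_def by force+
    then show ?thesis
      using M_bound[of "u k + 0" "u k + e"] unfolding f_def c_def by simp
  qed
  have c_convex: "convex_on UNIV c"
    unfolding c_def using h_quad g_quad by (rule convex_on_conv_model)
  have c_uk: "c (u k) = f (u k)"
    by (simp add: c_def f_def conv_model_def comp_obj_def)
  have prox_opt: "c (u k + d) + 1 / (2 * \<gamma> k) * (norm d)\<^sup>2 \<le> c (u k + w) + 1 / (2 * \<gamma> k) * (norm w)\<^sup>2"
    for w
    using iter[of k w] by (simp add: c_def d_def)
  have "f (u k) - L * norm d \<le> c (u k + d)"
    using convex_model_lower_bound[OF c_convex c_uk L_lip[folded f_def] uk_S[folded f_def] model_error] .
  then have "norm d \<le> \<gamma> k * L"
    by (rule convex_prox_step_norm_le[OF c_convex \<gamma>_pos less_imp_le[OF L_pos] prox_opt, unfolded c_uk])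
  also have "\<gamma> k * L \<le> 1"
    using step L_pos by (simp add: le_divide_eq mult.commute)
  finally have "norm d \<le> 1" .
  then have "f (u k + d) - c (u k + d) \<le> M / 2 * (norm d)\<^sup>2"
    by (rule abs_le_D1[OF model_error])
  moreover have "M / 2 \<le> 1 / (2 * \<gamma> k)"
    using step \<gamma>_pos[of k] M_pos by (simp add: le_divide_eq divide_le_eq mult.commute)
  then have "M / 2 * (norm d)\<^sup>2 \<le> 1 / (2 * \<gamma> k) * (norm d)\<^sup>2"
    by (rule mult_right_mono) simp
  ultimately show ?thesis
    unfolding f_def c_def d_def by simp
qed

end
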